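(* Let $f:\mathbb{R}^2\to\mathbb{R}^2$ be a Topologically Anosov homeomorphism and $z_0\in\mathrm{Fix}(f)$. If $\Omega(f)\neq\{z_0\}$, then there exist $y_0\neq z_0$ and $z\in\mathbb{R}^2$ such that $y_0\in\omega(z)$.
   Context: A homeomorphism $f:\mathbb{R}^2\to\mathbb{R}^2$ is Topologically Anosov (TA) if: (i) there is a continuous strictly positive $\epsilon:\mathbb{R}^2\to\mathbb{R}$ such that for all $x\neq y$ there is $k\in\mathbb{Z}$ with $\|f^k(x)-f^k(y)\|>\epsilon(f^k(x))$; and (ii) for every continuous strictly positive $\epsilon$ there is a continuous strictly positive $\delta$ such that every $\delta$-pseudo-orbit is $\epsilon$-shadowed by an orbit. A $\delta$-pseudo-orbit is a sequence $(x_n)_{n\in\mathbb{Z}}$ with $\|f(x_n)-x_{n+1}\|<\delta(f(x_n))$; it is $\epsilon$-shadowed by the orbit of $x$ if $\|x_n-f^n(x)\|<\epsilon(x_n)$ for all $n$. $\Omega(f)$ is the nonwandering set; $\omega(z)$ is the $\omega$-limit set. *)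

theory Defs
  imports "HOL-Analysis.Analysis"
begin

type_synonym R2 = "real ^ 2"

definition iter :: "(R2 \<Rightarrow> R2) \<Rightarrow> int \<Rightarrow> R2 \<Rightarrow> R2" where
  "iter f k = (if 0 \<le> k then f ^^ nat k else inv f ^^ nat (- k))"

definition pos_cont :: "(R2 \<Rightarrow> real) \<Rightarrow> bool" where
  "pos_cont e \<longleftrightarrow> continuous_on UNIV e \<and> (\<forall>x. 0 < e x)"

definition is_homeo :: "(R2 \<Rightarrow> R2) \<Rightarrow> bool" where
  "is_homeo f \<longleftrightarrow> (\<exists>g. homeomorphism UNIV UNIV f g)"

definition expansive_TA :: "(R2 \<Rightarrow> R2) \<Rightarrow> bool" where
  "expansive_TA f \<longleftrightarrow> (\<exists>e. pos_cont e \<and>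
     (\<forall>x y. x \<noteq> y \<longrightarrow> (\<exists>k::int. norm (iter f k x - iter f k y) > e (iter f k x))))"

definition pseudo_orbit :: "(R2 \<Rightarrow> R2) \<Rightarrow> (R2 \<Rightarrow> real) \<Rightarrow> (int \<Rightarrow> R2) \<Rightarrow> bool" where
  "pseudo_orbit f d xs \<longleftrightarrow> (\<forall>n. norm (f (xs n) - xs (n + 1)) < d (f (xs n)))"

definition shadowed :: "(R2 \<Rightarrow> R2) \<Rightarrow> (R2 \<Rightarrow> real) \<Rightarrow> (int \<Rightarrow> R2) \<Rightarrow> R2 \<Rightarrow> bool" where
  "shadowed f e xs x \<longleftrightarrow> (\<forall>n. norm (xs n - iter f n x) < e (xs n))"

definition shadowing_TA :: "(R2 \<Rightarrow> R2) \<Rightarrow> bool" where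
  "shadowing_TA f \<longleftrightarrow> (\<forall>e. pos_cont e \<longrightarrow> (\<exists>d. pos_cont d \<and>
     (\<forall>xs. pseudo_orbit f d xs \<longrightarrow> (\<exists>x. shadowed f e xs x))))"

definition topologically_anosov :: "(R2 \<Rightarrow> R2) \<Rightarrow> bool" where
  "topologically_anosov f \<longleftrightarrow> is_homeo f \<and> expansive_TA f \<and> shadowing_TA f"

definition nonwandering :: "(R2 \<Rightarrow> R2) \<Rightarrow> R2 set" where
  "nonwandering f = {x. \<forall>U. open U \<and> x \<in> U \<longrightarrow> (\<exists>n::nat. n \<ge> 1 \<and> (f ^^ n) ` U \<inter> U \<noteq> {})}"

definition omega_limit :: "(R2 \<Rightarrow> R2) \<Rightarrow> R2 \<Rightarrow> R2 set" where
  "omega_limit f z = {y. \<exists>r::nat \<Rightarrow> nat. strict_mono r \<and> ((\<lambda>k. (f ^^ r k) z) \<longlongrightarrow> y) sequentially}"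

end

theory Submission
  imports Defs
begin

text \<open>Shadowing turns non-wandering points into limits of \<open>\<omega>\<close>-limit points. Near a
non-wandering point \<open>x\<close> there is a point \<open>u\<close> with \<open>f\<^sup>n u\<close> so close to \<open>u\<close> that
\<open>u, f u, \<dots>, f\<^sup>n\<^sup>-\<^sup>1 u\<close> repeated periodically is a \<open>\<delta>\<close>-pseudo-orbit. An orbit shadowing
it within a constant \<open>r\<close> returns to the ball \<open>cball u r\<close> at every multiple of \<open>n\<close>, so it
has an \<open>\<omega>\<close>-limit point there, within \<open>2r\<close> of \<open>x\<close>. Applied to a non-wandering point
\<open>x \<noteq> z\<^sub>0\<close> with \<open>2r < dist x z\<^sub>0\<close>, this gives an \<open>\<omega>\<close>-limit point different from \<open>z\<^sub>0\<close>.\<close>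

lemma iter_of_nat [simp]: "iter f (int m) = f ^^ m"
  by (simp add: iter_def)

lemma fixed_point_in_nonwandering:
  assumes "f z = z"
  shows "z \<in> nonwandering f"
  unfolding nonwandering_def
proof (intro CollectI allI impI)
  fix U assume "open U \<and> z \<in> U"
  then have "f z \<in> f ` U" and "z \<in> U"
    by auto
  then have "z \<in> (f ^^ 1) ` U \<inter> U"
    using assms by simp
  then show "\<exists>n::nat. n \<ge> 1 \<and> (f ^^ n) ` U \<inter> U \<noteq> {}"
    by blast
qed

lemma nonwandering_closing:
  assumes "x \<in> nonwandering f" and "pos_cont d" and "e > 0"
  obtains u n where "n \<ge> 1" and "dist x u < e" and "norm ((f ^^ n) u - u) < d ((f ^^ n) u)"
proof -
  have dpos: "\<And>y. 0 < d y" and "isCont d x"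
    using assms(2) by (auto simp: pos_cont_def continuous_on_eq_continuous_at)
  then obtain s where "s > 0" and s: "\<And>y. dist y x < s \<Longrightarrow> dist (d y) (d x) < d x / 2"
    unfolding continuous_at_eps_delta by (metis half_gt_zero)
  define \<rho> where "\<rho> = min s (min (d x / 4) e)"
  have "\<rho> > 0"
    using \<open>s > 0\<close> dpos \<open>e > 0\<close> by (simp add: \<rho>_def)
  then have "open (ball x \<rho>) \<and> x \<in> ball x \<rho>"
    by simp
  then obtain n :: nat where "n \<ge> 1" and "(f ^^ n) ` ball x \<rho> \<inter> ball x \<rho> \<noteq> {}"
    using assms(1) unfolding nonwandering_def by blast
  then obtain u where u: "dist x u < \<rho>" and fu: "dist x ((f ^^ n) u) < \<rho>"
    by auto
  have "dist ((f ^^ n) u) x < s"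
    using fu by (simp add: \<rho>_def dist_commute)
  then have "\<bar>d ((f ^^ n) u) - d x\<bar> < d x / 2"
    using s by (simp add: dist_real_def)
  then have "d x / 2 < d ((f ^^ n) u)"
    by linarith
  moreover have "dist ((f ^^ n) u) u < 2 * \<rho>"
    using u fu dist_triangle[of "(f ^^ n) u" u x] dist_commute[of x "(f ^^ n) u"] by linarith
  moreover have "2 * \<rho> \<le> d x / 2"
    by (simp add: \<rho>_def)
  ultimately have "norm ((f ^^ n) u - u) < d ((f ^^ n) u)"
    by (simp add: dist_norm)
  moreover have "dist x u < e"
    using u by (simp add: \<rho>_def)
  ultimately show thesis
    using that \<open>n \<ge> 1\<close> by blast
qed

lemma pseudo_orbit_periodic:
  assumes "n \<ge> 1" and "\<And>y. 0 < d y" and "norm ((f ^^ n) u - u) < d ((f ^^ n) u)"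
  shows "pseudo_orbit f d (\<lambda>m. (f ^^ nat (m mod int n)) u)"
  unfolding pseudo_orbit_def
proof
  fix m :: int
  have n0: "int n > 0"
    using assms(1) by simp
  have succ: "(m + 1) mod int n = (m mod int n + 1) mod int n"
    by (simp add: mod_add_left_eq)
  show "norm (f ((f ^^ nat (m mod int n)) u) - (f ^^ nat ((m + 1) mod int n)) u)
        < d (f ((f ^^ nat (m mod int n)) u))"
  proof (cases "m mod int n + 1 < int n")
    case True
    then have "(m + 1) mod int n = m mod int n + 1"
      using succ n0 by simp
    then have "nat ((m + 1) mod int n) = Suc (nat (m mod int n))"
      using n0 by (simp add: nat_add_distrib)
    then show ?thesis
      using assms(2) by simp
  next
    case False
    then have last: "m mod int n = int n - 1"
      using n0 pos_mod_bound[of "int n" m] by linarith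
    then have "(m + 1) mod int n = 0"
      using succ by simp
    moreover have "nat (m mod int n) = n - 1"
      using last by simp
    then have "f ((f ^^ nat (m mod int n)) u) = (f ^^ n) u"
      using assms(1) by (cases n) simp_all
    ultimately show ?thesis
      using assms(3) by simp
  qed
qed

lemma shadowed_periodic_returns:
  assumes "shadowed f (\<lambda>_. r) (\<lambda>m. (f ^^ nat (m mod int n)) u) w"
  shows "(f ^^ (k * n)) w \<in> cball u r"
proof -
  have "norm ((f ^^ nat (int (k * n) mod int n)) u - iter f (int (k * n)) w) < r"
    using assms unfolding shadowed_def by blast
  then show ?thesis
    by (simp add: dist_norm del: of_nat_mult)
qed

lemma omega_limit_meets_compact:
  assumes "compact K" and "n \<ge> 1" and "\<And>k. (f ^^ (k * n)) w \<in> K"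
  obtains y where "y \<in> K" and "y \<in> omega_limit f w"
proof -
  obtain y r where "y \<in> K" and "strict_mono r"
    and lim: "((\<lambda>k. (f ^^ (k * n)) w) \<circ> r) \<longlonglongrightarrow> y"
    using seq_compactE[OF compact_imp_seq_compact[OF assms(1)], of "\<lambda>k. (f ^^ (k * n)) w"] assms(3)
    by blast
  moreover have "strict_mono (\<lambda>k. r k * n)"
    using \<open>strict_mono r\<close> assms(2) unfolding strict_mono_def by simp
  ultimately have "y \<in> omega_limit f w"
    unfolding omega_limit_def by (auto simp: o_def)
  with \<open>y \<in> K\<close> show thesis
    using that by blast
qed

lemma nonwandering_near_omega_limit:
  assumes "shadowing_TA f" and "x \<in> nonwandering f" and "e > 0"
  obtains y z where "y \<in> omega_limit f z" and "dist x y < e"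
proof -
  define r where "r = e / 2"
  have "r > 0"
    using assms(3) by (simp add: r_def)
  then have "pos_cont (\<lambda>_. r)"
    by (simp add: pos_cont_def)
  then obtain d where "pos_cont d"
    and shadow: "\<And>xs. pseudo_orbit f d xs \<Longrightarrow> \<exists>w. shadowed f (\<lambda>_. r) xs w"
    using assms(1) unfolding shadowing_TA_def by blast
  obtain u n where "n \<ge> 1" and "dist x u < r" and jump: "norm ((f ^^ n) u - u) < d ((f ^^ n) u)"
    using nonwandering_closing[OF assms(2) \<open>pos_cont d\<close> \<open>r > 0\<close>] .
  have "pseudo_orbit f d (\<lambda>m. (f ^^ nat (m mod int n)) u)"
    using \<open>pos_cont d\<close> by (intro pseudo_orbit_periodic \<open>n \<ge> 1\<close> jump) (simp add: pos_cont_def)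
  then obtain w where "shadowed f (\<lambda>_. r) (\<lambda>m. (f ^^ nat (m mod int n)) u) w"
    using shadow by blast
  then obtain y where "y \<in> cball u r" and "y \<in> omega_limit f w"
    using omega_limit_meets_compact[OF compact_cball \<open>n \<ge> 1\<close> shadowed_periodic_returns] by blast
  moreover have "dist x y < e"
    using \<open>dist x u < r\<close> \<open>y \<in> cball u r\<close> dist_triangle[of x y u] by (simp add: r_def)
  ultimately show thesis
    using that by blast
qed

theorem mainTheorem14:
  fixes f :: "R2 \<Rightarrow> R2" and z0 :: R2
  assumes "topologically_anosov f"
    and "f z0 = z0"
    and "nonwandering f \<noteq> {z0}"
  shows "\<exists>y0 z. y0 \<noteq> z0 \<and> y0 \<in> omega_limit f z"
proof -
  have "shadowing_TA f"
    using assms(1) by (simp add: topologically_anosov_def)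
  obtain x where x: "x \<in> nonwandering f" and "x \<noteq> z0"
    using assms(3) fixed_point_in_nonwandering[of f z0, OF assms(2)] by blast
  then have "0 < dist x z0"
    by simp
  with x obtain y z where "y \<in> omega_limit f z" and "dist x y < dist x z0"
    by (rule nonwandering_near_omega_limit[OF \<open>shadowing_TA f\<close>])
  then show ?thesis
    by (metis less_irrefl)
qed

end
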